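(* Let $u=u_1u_2\ldots u_n\in\mathbb{P}^*$ have an increasing/decreasing factorization. For $1\le i\le n-1$ let $s_i=u_{i+1}u_{i+2}\ldots u_n$ and $d_i=d_i(u)$, and let $s_n=\varepsilon$ (the empty word) and $d_n=0$. Then $$S(u;t,x)=\frac{t^{n}x^{\Sigma(u)}}{t^{n}x^{\Sigma(u)}+(1-x-tx)\sum_{i=1}^{n}t^{n-i}x^{d_i+\Sigma(s_i)}(1-x)^{i-1}}.$$
   Context: $\mathbb{P}$ is the set of positive integers with the usual order $\le$, and $\mathbb{P}^*$ is the set of all finite words (including the empty word $\varepsilon$) over $\mathbb{P}$. For $w=w_1\ldots w_n$, $|w|=n$ and $\Sigma(w)=\sum_{i=1}^n w_i$; the weight of $w$ is $\mathrm{wt}(w)=t^{|w|}x^{\Sigma(w)}$. For $u,w\in\mathbb{P}^*$, write $u\le w$ (generalized factor order) if there is a factor $v$ of $w$ (a string of $|u|$ consecutive letters of $w$) with $|v|=|u|$ such that the $i$-th letter of $v$ is $\ge$ the $i$-th letter of $u$ for all $i$; such a $v$ (with its position) is an embedding of $u$ into $w$. $\mathcal{S}(u)$ is the set of words $w$ with $u\le w$ such that the last $|u|$ letters of $w$ form the only embedding of $u$ into $w$, and $S(u;t,x)=\sum_{w\in\mathcal{S}(u)}\mathrm{wt}(w)$. A word $u=u_1\ldots u_n$ has an increasing/decreasing factorization if either $u_1\le\cdots\le u_n$, or there is $k<n$ with $u_1\le\cdots\le u_k>u_{k+1}\ge\cdots\ge u_n$. For $1\le i\le n-1$, $D^{(i)}(u)=\{n-i+j:1\le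 j\le i,\ u_j>u_{n-i+j}\}$ and $d_i(u)=\sum_{n-i+j\in D^{(i)}(u)}(u_j-u_{n-i+j})$. *)

theory Defs
  imports "HOL-Computational_Algebra.Formal_Power_Series"
begin

(* Words over the positive integers P are lists of naturals with all letters > 0.
   Letters are accessed 1-indexed via "letter". *)
definition pos_word :: "nat list \<Rightarrow> bool" where
  "pos_word w \<longleftrightarrow> (\<forall>a\<in>set w. 0 < a)"

definition letter :: "nat list \<Rightarrow> nat \<Rightarrow> nat" where
  "letter w p = w ! (p - 1)"

(* the factor of w starting at (0-indexed) position k is an embedding of u *)
definition embeds_at :: "nat list \<Rightarrow> nat list \<Rightarrow> nat \<Rightarrow> bool" where
  "embeds_at u w k \<longleftrightarrow> k + length u \<le> length w \<and> (\<forall>i<length u. u ! i \<le> w ! (k + i))"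

definition gfo_le :: "nat list \<Rightarrow> nat list \<Rightarrow> bool" where
  "gfo_le u w \<longleftrightarrow> (\<exists>k. embeds_at u w k)"

definition Sset :: "nat list \<Rightarrow> nat list set" where
  "Sset u = {w. pos_word w \<and> gfo_le u w \<and>
                 (\<forall>k. embeds_at u w k \<longrightarrow> k = length w - length u)}"

(* bivariate formal power series in t (outer variable) and x (inner variable) *)
definition tvar :: "real fps fps" where "tvar = fps_X"
definition xvar :: "real fps fps" where "xvar = fps_const fps_X"

definition S_gf :: "nat list \<Rightarrow> real fps fps" where
  "S_gf u = Abs_fps (\<lambda>m. Abs_fps (\<lambda>N.
      of_nat (card {w \<in> Sset u. length w = m \<and> sum_list w = N})))"

definition inc_dec_fact :: "nat list \<Rightarrow> bool" where
  "inc_dec_fact u \<longleftrightarrow> sorted u \<or>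
     (\<exists>k. 1 \<le> k \<and> k < length u \<and> sorted (take k u) \<and> u ! (k - 1) > u ! k \<and>
          sorted_wrt (\<ge>) (drop k u))"

definition Dset :: "nat \<Rightarrow> nat list \<Rightarrow> nat set" where
  "Dset i u = {length u - i + j | j. 1 \<le> j \<and> j \<le> i \<and> letter u j > letter u (length u - i + j)}"

definition dval :: "nat \<Rightarrow> nat list \<Rightarrow> nat" where
  "dval i u = (\<Sum>p\<in>Dset i u. letter u (p - (length u - i)) - letter u p)"

end

theory Submission
  imports Defs
begin

(* Write A for the generating function of the set of words w with u not <= w (the
   avoiders of u) and S for S(u;t,x).

   (1) Appending one letter to an avoider gives either a nonempty avoider or a word of
       S(u), and every such word arises uniquely.  Since the letters have generating
       function tx/(1-x), this yields  A tx = (A - 1 + S)(1 - x).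
   (2) Appending to an avoider a word that dominates u letterwise gives a word whose
       leftmost embedding of u overlaps the appended part in i positions, 1 <= i <= n.
       Cutting after that embedding yields a word of S(u) whose last i letters dominate
       u_1...u_i, followed by a word dominating s_i.  For an increasing/decreasing u the
       first factor is in weight-shifting bijection (by x^{d_i}) with S(u).

   Solving the two resulting linear equations for S gives the formula; the denominator
   is invertible since its constant coefficient is 1. *)

unbundle fps_syntax


section \<open>Generating functions of sets of words\<close>

definition word_gf :: "nat list set \<Rightarrow> real fps fps" where
  "word_gf W = Abs_fps (\<lambda>m. Abs_fps (\<lambda>N. of_nat (card {w\<in>W. length w = m \<and> sum_list w = N})))"

lemma word_gf_nth: "word_gf W $ m $ N = of_nat (card {w\<in>W. length w = m \<and> sum_list w = N})"
  by (simp add: word_gf_def)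

lemma S_gf_eq_word_gf: "S_gf u = word_gf (Sset u)"
  by (simp add: S_gf_def word_gf_def)

lemma finite_words_length_sum: "finite {w\<in>W. length w = m \<and> sum_list w = (N::nat)}"
proof (rule finite_subset)
  show "{w\<in>W. length w = m \<and> sum_list w = N} \<subseteq> {xs. set xs \<subseteq> {..N} \<and> length xs = m}"
    using member_le_sum_list by fastforce
  show "finite {xs. set xs \<subseteq> {..N} \<and> length xs = m}"
    by (rule finite_lists_length_eq) simp
qed

lemma word_gf_Un: "X \<inter> Y = {} \<Longrightarrow> word_gf (X \<union> Y) = word_gf X + word_gf Y"
proof (intro fps_ext)
  fix m N :: nat assume disj: "X \<inter> Y = {}"
  let ?slice = "\<lambda>W. {w\<in>W. length w = m \<and> sum_list w = N}"
  have "?slice (X \<union> Y) = ?slice X \<union> ?slice Y" by auto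
  moreover have "card (?slice X \<union> ?slice Y) = card (?slice X) + card (?slice Y)"
    by (rule card_Un_disjoint) (use disj finite_words_length_sum in auto)
  ultimately show "word_gf (X \<union> Y) $ m $ N = (word_gf X + word_gf Y) $ m $ N"
    by (simp add: word_gf_nth)
qed

lemma word_gf_UN:
  assumes "finite I" "\<And>i j. i \<in> I \<Longrightarrow> j \<in> I \<Longrightarrow> i \<noteq> j \<Longrightarrow> F i \<inter> F j = {}"
  shows "word_gf (\<Union>i\<in>I. F i) = (\<Sum>i\<in>I. word_gf (F i))"
proof (intro fps_ext)
  fix m N :: nat
  let ?slice = "\<lambda>W. {w\<in>W. length w = m \<and> sum_list w = N}"
  have "?slice (\<Union>i\<in>I. F i) = (\<Union>i\<in>I. ?slice (F i))" by auto
  moreover have "card (\<Union>i\<in>I. ?slice (F i)) = (\<Sum>i\<in>I. card (?slice (F i)))"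
    by (rule card_UN_disjoint) (use assms finite_words_length_sum in auto)
  ultimately show "word_gf (\<Union>i\<in>I. F i) $ m $ N = (\<Sum>i\<in>I. word_gf (F i)) $ m $ N"
    by (simp add: word_gf_nth fps_sum_nth)
qed

lemma word_gf_Nil: "word_gf {[]} = 1"
proof (intro fps_ext)
  fix m N :: nat
  have "{w\<in>{[]}. length w = m \<and> sum_list w = N} = (if m = 0 \<and> N = 0 then {[]} else {})" by auto
  then show "word_gf {[]} $ m $ N = (1::real fps fps) $ m $ N"
    by (simp add: word_gf_nth)
qed

definition word_prod :: "nat list set \<Rightarrow> nat list set \<Rightarrow> nat list set" where
  "word_prod X Y = (\<lambda>(a, b). a @ b) ` (X \<times> Y)"

lemma word_gf_prod:
  assumes inj: "inj_on (\<lambda>(a, b). a @ b) (X \<times> Y)"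
  shows "word_gf (word_prod X Y) = word_gf X * word_gf Y"
proof (intro fps_ext)
  fix m N :: nat
  define XX where "XX i j = {a\<in>X. length a = i \<and> sum_list a = j}" for i j
  define YY where "YY i j = {a\<in>Y. length a = i \<and> sum_list a = j}" for i j
  define P where "P = {(a,b)\<in>X \<times> Y. length a + length b = m \<and> sum_list a + sum_list b = N}"
  have slice: "{w\<in>word_prod X Y. length w = m \<and> sum_list w = N} = (\<lambda>(a,b). a @ b) ` P"
    unfolding P_def word_prod_def by auto
  have card_slice: "card ((\<lambda>(a,b). a @ b) ` P) = card P"
    by (rule card_image, rule inj_on_subset[OF inj]) (auto simp: P_def)
  have "P = (\<Union>ij\<in>{..m} \<times> {..N}. XX (fst ij) (snd ij) \<times> YY (m - fst ij) (N - snd ij))"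
    unfolding P_def XX_def YY_def by force
  then have card_P: "card P =
      (\<Sum>ij\<in>{..m} \<times> {..N}. card (XX (fst ij) (snd ij)) * card (YY (m - fst ij) (N - snd ij)))"
    by (simp, subst card_UN_disjoint)
       (auto simp: XX_def YY_def finite_words_length_sum card_cartesian_product)
  have "(word_gf X * word_gf Y) $ m $ N =
      (\<Sum>i=0..m. \<Sum>j=0..N. word_gf X $ i $ j * word_gf Y $ (m-i) $ (N-j))"
    by (simp add: fps_mult_nth fps_sum_nth)
  also have "\<dots> = (\<Sum>i\<in>{..m}. \<Sum>j\<in>{..N}. of_nat (card (XX i j) * card (YY (m - i) (N - j))))"
    by (simp add: word_gf_nth XX_def YY_def atLeast0AtMost)
  also have "\<dots> = of_nat (card P)"
    unfolding card_P by (simp add: sum.cartesian_product split_beta)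
  finally show "word_gf (word_prod X Y) $ m $ N = (word_gf X * word_gf Y) $ m $ N"
    by (simp add: word_gf_nth slice card_slice)
qed

lemma inj_append_left_length:
  "(\<And>a. a \<in> X \<Longrightarrow> length a = k) \<Longrightarrow> inj_on (\<lambda>(a, b). a @ b) (X \<times> Y)"
  by (auto simp: inj_on_def append_eq_append_conv)

lemma inj_append_right_length:
  "(\<And>b. b \<in> Y \<Longrightarrow> length b = k) \<Longrightarrow> inj_on (\<lambda>(a, b). a @ b) (X \<times> Y)"
  unfolding inj_on_def by clarify (metis append_eq_append_conv)

lemma word_gf_shift:
  assumes bij: "bij_betw f X Y"
    and w: "\<And>w. w \<in> X \<Longrightarrow> length (f w) = length w \<and> sum_list (f w) = sum_list w + D"
  shows "word_gf Y = xvar ^ D * word_gf X"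
proof (intro fps_ext)
  fix m N :: nat
  have rhs: "(xvar ^ D * word_gf X) $ m $ N = (if N < D then 0 else word_gf X $ m $ (N - D))"
    by (simp add: xvar_def fps_X_power_mult_nth)
  have img: "{w\<in>Y. length w = m \<and> sum_list w = N} = f ` {w\<in>X. length w = m \<and> sum_list w + D = N}"
    using bij w unfolding bij_betw_def by force
  have "card {w\<in>Y. length w = m \<and> sum_list w = N} = card {w\<in>X. length w = m \<and> sum_list w + D = N}"
    unfolding img by (rule card_image, rule inj_on_subset[OF bij_betw_imp_inj_on[OF bij]]) auto
  moreover have "{w\<in>X. length w = m \<and> sum_list w + D = N} =
      (if N < D then {} else {w\<in>X. length w = m \<and> sum_list w = N - D})" by auto
  ultimately show "word_gf Y $ m $ N = (xvar ^ D * word_gf X) $ m $ N"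
    by (simp add: rhs word_gf_nth)
qed


section \<open>Words dominating a given word\<close>

definition dominating :: "nat list \<Rightarrow> nat list set" where
  "dominating v = {w. length w = length v \<and> (\<forall>i<length v. v!i \<le> w!i)}"

lemma dominating_Nil: "dominating [] = {[]}"
  by (auto simp: dominating_def)

lemma dominating_Cons: "dominating (c # v) = word_prod (dominating [c]) (dominating v)"
proof
  show "dominating (c # v) \<subseteq> word_prod (dominating [c]) (dominating v)"
  proof
    fix w assume w: "w \<in> dominating (c # v)"
    then obtain x w' where wx: "w = x # w'" by (cases w) (auto simp: dominating_def)
    have "[x] \<in> dominating [c]" using w wx by (auto simp: dominating_def)
    moreover have "w' \<in> dominating v" using w wx by (fastforce simp: dominating_def)
    ultimately show "w \<in> word_prod (dominating [c]) (dominating v)"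
      using wx by (auto simp: word_prod_def intro!: image_eqI[where x="([x],w')"])
  qed
  show "word_prod (dominating [c]) (dominating v) \<subseteq> dominating (c # v)"
  proof (clarsimp simp: word_prod_def)
    fix a b assume a: "a \<in> dominating [c]" and b: "b \<in> dominating v"
    then obtain x where "a = [x]" "c \<le> x"
      by (cases a) (auto simp: dominating_def)
    then show "a @ b \<in> dominating (c # v)"
      using b by (auto simp: dominating_def nth_Cons split: nat.splits)
  qed
qed

text \<open>A single letter at least c contributes t (x^c + x^(c+1) + ...) = t x^c / (1 - x).\<close>

lemma word_gf_dominating_letter: "word_gf (dominating [c]) * (1 - xvar) = tvar * xvar ^ c"
proof -
  define gc :: "real fps" where "gc = Abs_fps (\<lambda>N. if c \<le> N then 1 else 0)"
  have letters: "word_gf (dominating [c]) = tvar * fps_const gc"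
  proof (intro fps_ext)
    fix m N :: nat
    have "{w\<in>dominating [c]. length w = m \<and> sum_list w = N} =
        (if m = 1 \<and> c \<le> N then {[N]} else {})"
      by (auto simp: dominating_def length_Suc_conv)
    then show "word_gf (dominating [c]) $ m $ N = (tvar * fps_const gc) $ m $ N"
      by (simp add: word_gf_nth tvar_def gc_def)
  qed
  have geometric: "gc * (1 - fps_X) = fps_X ^ c"
  proof (intro fps_ext)
    fix N :: nat
    have "(gc * fps_X) $ N = (fps_X * gc) $ N" by (simp add: mult.commute)
    then show "(gc * (1 - fps_X)) $ N = (fps_X ^ c :: real fps) $ N"
      by (simp add: right_diff_distrib gc_def; cases c; auto)
  qed
  have "word_gf (dominating [c]) * (1 - xvar) = tvar * fps_const (gc * (1 - fps_X))"
    by (simp add: letters xvar_def mult.assoc flip: fps_const_1_eq_1)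
  also have "\<dots> = tvar * xvar ^ c" by (simp add: geometric xvar_def)
  finally show ?thesis .
qed

lemma word_gf_dominating:
  "word_gf (dominating v) * (1 - xvar) ^ length v = tvar ^ length v * xvar ^ sum_list v"
proof (induction v)
  case Nil
  then show ?case by (simp add: dominating_Nil word_gf_Nil)
next
  case (Cons c v)
  have "word_gf (dominating (c # v)) = word_gf (dominating [c]) * word_gf (dominating v)"
    unfolding dominating_Cons[of c v]
    by (rule word_gf_prod, rule inj_append_left_length[where k=1]) (auto simp: dominating_def)
  then have "word_gf (dominating (c # v)) * (1 - xvar) ^ length (c # v)
     = (word_gf (dominating [c]) * (1 - xvar)) * (word_gf (dominating v) * (1 - xvar) ^ length v)"
    by (simp add: algebra_simps)
  also have "\<dots> = tvar ^ length (c # v) * xvar ^ sum_list (c # v)"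
    unfolding Cons.IH word_gf_dominating_letter by (simp add: power_add mult_ac)
  finally show ?case .
qed


lemma embeds_at_append_prefix:
  "k + length u \<le> length a \<Longrightarrow> embeds_at u (a @ b) k = embeds_at u a k"
  unfolding embeds_at_def by (auto simp: nth_append)

lemma embeds_at_take:
  "embeds_at u (take m w) k \<longleftrightarrow> (k + length u \<le> m \<and> embeds_at u w k)"
  unfolding embeds_at_def by auto

lemma pos_word_iff: "pos_word w \<longleftrightarrow> (\<forall>k<length w. 0 < w!k)"
  by (auto simp: pos_word_def in_set_conv_nth)

lemma Sset_length: "p \<in> Sset u \<Longrightarrow> length u \<le> length p"
  unfolding Sset_def gfo_le_def embeds_at_def by auto

lemma Sset_embeds_at_end:
  assumes "p \<in> Sset u" "q < length u"
  shows "u!q \<le> p!(length p - length u + q)"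
proof -
  obtain k where k: "embeds_at u p k" using assms(1) unfolding Sset_def gfo_le_def by auto
  then have "k = length p - length u" using assms(1) unfolding Sset_def by auto
  then show ?thesis using k assms(2) unfolding embeds_at_def by auto
qed

lemma Sset_leftmost_embedding:
  assumes "p \<in> Sset u"
  shows "(LEAST k. embeds_at u (p @ r) k) = length p - length u"
proof (rule Least_equality)
  have len: "length u \<le> length p" using Sset_length[OF assms] .
  obtain k where k: "embeds_at u p k" using assms unfolding Sset_def gfo_le_def by auto
  then have "k = length p - length u" using assms unfolding Sset_def by auto
  then show "embeds_at u (p @ r) (length p - length u)"
    using k len by (subst embeds_at_append_prefix) auto
  fix y assume y: "embeds_at u (p @ r) y"
  show "length p - length u \<le> y"
  proof (rule ccontr)
    assume less: "\<not> length p - length u \<le> y"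
    then have "embeds_at u p y" using y len by (subst (asm) embeds_at_append_prefix) auto
    then show False using assms less unfolding Sset_def by auto
  qed
qed


lemma take_leftmost_embedding_in_Sset:
  assumes pos: "pos_word w" and emb: "embeds_at u w k"
  shows "take ((LEAST k. embeds_at u w k) + length u) w \<in> Sset u"
proof -
  define k0 where "k0 = (LEAST k. embeds_at u w k)"
  let ?p = "take (k0 + length u) w"
  have ek0: "embeds_at u w k0" unfolding k0_def by (rule LeastI[of "\<lambda>k. embeds_at u w k", OF emb])
  then have lp: "length ?p = k0 + length u" by (simp add: embeds_at_def)
  have "pos_word ?p" using pos by (auto simp: pos_word_def dest: in_set_takeD)
  moreover have "embeds_at u ?p k0" unfolding embeds_at_take using ek0 by simp
  moreover have "k = length ?p - length u" if "embeds_at u ?p k" for k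
  proof -
    have "k \<le> k0" "embeds_at u w k" using that unfolding embeds_at_take by auto
    moreover then have "k0 \<le> k" unfolding k0_def by (simp add: Least_le)
    ultimately show ?thesis using lp by simp
  qed
  ultimately show ?thesis unfolding k0_def by (auto simp: Sset_def gfo_le_def)
qed


section \<open>First decomposition: avoiders followed by one letter\<close>

definition avoiders :: "nat list \<Rightarrow> nat list set" where
  "avoiders u = {w. pos_word w \<and> \<not> gfo_le u w}"

lemma Nil_in_avoiders: "u \<noteq> [] \<Longrightarrow> [] \<in> avoiders u"
  by (auto simp: avoiders_def pos_word_def gfo_le_def embeds_at_def)

lemma avoiders_Sset_disjoint: "avoiders u \<inter> Sset u = {}"
  by (auto simp: avoiders_def Sset_def)

text \<open>Deleting the last letter of a nonempty avoider or of a word of S(u) gives an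
  avoider: an embedding in the shortened word would be an embedding that is not final.\<close>

lemma butlast_in_avoiders:
  assumes u: "u \<noteq> []" and w: "w \<in> (avoiders u - {[]}) \<union> Sset u"
  shows "butlast w \<in> avoiders u"
proof -
  have wne: "w \<noteq> []" using w u Sset_length[of w u] by auto
  have "pos_word w" using w by (auto simp: avoiders_def Sset_def)
  then have "pos_word (butlast w)" by (auto simp: pos_word_def dest: in_set_butlastD)
  moreover have "\<not> gfo_le u (butlast w)"
  proof
    assume "gfo_le u (butlast w)"
    then obtain k where k: "embeds_at u (butlast w) k" by (auto simp: gfo_le_def)
    have kl: "k + length u \<le> length w - 1" using k by (simp add: embeds_at_def)
    have kw: "embeds_at u w k"
      using k embeds_at_append_prefix[of k u "butlast w" "[last w]"] kl wne by simp
    show False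
    proof (cases "w \<in> Sset u")
      case True
      then have "k = length w - length u" using kw by (auto simp: Sset_def)
      then show False using kl u wne by (cases u) auto
    next
      case False
      then show False using w kw by (auto simp: avoiders_def gfo_le_def)
    qed
  qed
  ultimately show ?thesis by (simp add: avoiders_def)
qed

text \<open>An avoider followed by a positive letter is a nonempty avoider or lies in S(u),
  since any new embedding must use the new last letter.\<close>

lemma avoiders_append_letter:
  assumes "u \<noteq> []"
  shows "word_prod (avoiders u) (dominating [1]) = (avoiders u - {[]}) \<union> Sset u"
proof
  show "word_prod (avoiders u) (dominating [1]) \<subseteq> (avoiders u - {[]}) \<union> Sset u"
    unfolding word_prod_def
  proof clarify
    fix a b assume a: "a \<in> avoiders u" and b: "b \<in> dominating [1]" and nS: "a @ b \<notin> Sset u"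
    obtain x where bx: "b = [x]" "1 \<le> x" using b by (cases b) (auto simp: dominating_def)
    have pos: "pos_word (a @ b)" using a bx by (auto simp: avoiders_def pos_word_def)
    have only_final: "k = length (a @ b) - length u" if k: "embeds_at u (a @ b) k" for k
    proof (rule ccontr)
      assume ne: "k \<noteq> length (a @ b) - length u"
      have "k + length u \<le> length (a @ b)" using k by (simp add: embeds_at_def)
      then have "k + length u \<le> length a" using ne bx by auto
      then have "embeds_at u a k" using k by (simp add: embeds_at_append_prefix)
      then show False using a by (auto simp: avoiders_def gfo_le_def)
    qed
    have "\<not> gfo_le u (a @ b)"
      using nS pos only_final by (auto simp: Sset_def)
    then show "a @ b \<in> avoiders u - {[]}" using pos bx by (auto simp: avoiders_def)
  qed
  show "(avoiders u - {[]}) \<union> Sset u \<subseteq> word_prod (avoiders u) (dominating [1])"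
  proof
    fix w assume w: "w \<in> (avoiders u - {[]}) \<union> Sset u"
    have wne: "w \<noteq> []" using w assms Sset_length[of w u] by auto
    have pw: "pos_word w" using w by (auto simp: avoiders_def Sset_def)
    have last_split: "w = butlast w @ [last w]" using wne by simp
    have "[last w] \<in> dominating [1]"
      using pw wne last_in_set[OF wne] by (auto simp: dominating_def pos_word_def Suc_le_eq)
    moreover have "butlast w \<in> avoiders u" by (rule butlast_in_avoiders[OF assms w])
    ultimately show "w \<in> word_prod (avoiders u) (dominating [1])"
      unfolding word_prod_def by (intro image_eqI[where x="(butlast w, [last w])"]) (use last_split in auto)
  qed
qed

lemma avoiders_first_relation:
  assumes "u \<noteq> []"
  shows "word_gf (avoiders u) * (tvar * xvar) =
         (word_gf (avoiders u) - 1 + word_gf (Sset u)) * (1 - xvar)"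
proof -
  let ?A = "word_gf (avoiders u)"
  have nonempty: "word_gf (avoiders u - {[]}) = ?A - 1"
  proof -
    have "?A = word_gf ((avoiders u - {[]}) \<union> {[]})"
      using Nil_in_avoiders[OF assms] by (simp add: insert_absorb)
    also have "\<dots> = word_gf (avoiders u - {[]}) + 1" by (subst word_gf_Un) (auto simp: word_gf_Nil)
    finally show ?thesis by simp
  qed
  have "?A * word_gf (dominating [1]) = word_gf (word_prod (avoiders u) (dominating [1]))"
    by (rule word_gf_prod[symmetric], rule inj_append_right_length[where k=1])
       (auto simp: dominating_def)
  also have "\<dots> = ?A - 1 + word_gf (Sset u)"
    unfolding avoiders_append_letter[OF assms] nonempty[symmetric]
    by (rule word_gf_Un) (use avoiders_Sset_disjoint in auto)
  finally have letter: "?A * word_gf (dominating [1]) = ?A - 1 + word_gf (Sset u)" .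
  have "?A * (tvar * xvar) = ?A * word_gf (dominating [1]) * (1 - xvar)"
    using word_gf_dominating_letter[of 1] by (simp add: mult.assoc)
  then show ?thesis unfolding letter .
qed


section \<open>Second decomposition: avoiders followed by a word dominating u\<close>

text \<open>The words of S(u) whose last i letters dominate the prefix u_1...u_i, i.e. whose
  final embedding may be shifted i - n places to the right once more letters follow.\<close>

definition S_overlap :: "nat list \<Rightarrow> nat \<Rightarrow> nat list set" where
  "S_overlap u i = {p \<in> Sset u. \<forall>j<i. u!j \<le> p!(length p - i + j)}"

text \<open>Cutting a@v (a an avoider, v dominating u) right after its leftmost embedding of u.\<close>

lemma avoider_dominating_split:
  assumes "a \<in> avoiders u" "v \<in> dominating u" and pu: "pos_word u"
  shows "a @ v \<in> (\<Union>i\<in>{1..length u}. word_prod (S_overlap u i) (dominating (drop i u)))"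
proof -
  let ?n = "length u" and ?w = "a @ v"
  have lv: "length v = ?n" using assms by (simp add: dominating_def)
  have ea: "embeds_at u ?w (length a)"
    using assms lv by (auto simp: embeds_at_def dominating_def nth_append)
  define k0 where "k0 = (LEAST k. embeds_at u ?w k)"
  have ek0: "embeds_at u ?w k0" unfolding k0_def by (rule LeastI[of "\<lambda>k. embeds_at u ?w k", OF ea])
  have k0le: "k0 \<le> length a" unfolding k0_def by (rule Least_le[of "\<lambda>k. embeds_at u ?w k", OF ea])
  have k0gt: "length a < k0 + ?n"
  proof (rule ccontr)
    assume "\<not> length a < k0 + ?n"
    then have "embeds_at u a k0" using ek0 by (simp add: embeds_at_append_prefix)
    then show False using assms by (auto simp: avoiders_def gfo_le_def)
  qed
  define i where "i = k0 + ?n - length a"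
  have i1: "1 \<le> i" "i \<le> ?n" using k0gt k0le by (auto simp: i_def)
  define p where "p = take (k0 + ?n) ?w"
  define r where "r = drop (k0 + ?n) ?w"
  have wpr: "?w = p @ r" unfolding p_def r_def by (rule append_take_drop_id[symmetric])
  have lp: "length p = k0 + ?n" using k0le lv by (simp add: p_def)
  have "pos_word ?w" using assms
    by (auto simp: avoiders_def dominating_def pos_word_def in_set_conv_nth)
       (metis nth_mem order_less_le_trans)
  then have pS: "p \<in> Sset u"
    unfolding p_def k0_def using ea by (rule take_leftmost_embedding_in_Sset)
  have pT: "p \<in> S_overlap u i"
  proof -
    have "u!j \<le> p!(length p - i + j)" if j: "j < i" for j
    proof -
      have "length p - i + j = length a + j" using lp i1 k0gt by (simp add: i_def)
      moreover have "p!(length a + j) = v!j" using j i1 lp k0gt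
        by (simp add: p_def nth_append i_def)
      moreover have "u!j \<le> v!j" using assms j i1 by (auto simp: dominating_def)
      ultimately show ?thesis by simp
    qed
    then show ?thesis using pS by (simp add: S_overlap_def)
  qed
  have rD: "r \<in> dominating (drop i u)"
  proof -
    have lr: "length r = ?n - i" using lv k0le k0gt by (simp add: r_def i_def)
    have "(drop i u)!j \<le> r!j" if j: "j < ?n - i" for j
    proof -
      have "r!j = v!(i + j)" using j k0le k0gt lv
        by (simp add: r_def nth_append i_def add.commute add.left_commute)
      moreover have "u!(i+j) \<le> v!(i+j)" using assms j i1 by (auto simp: dominating_def)
      ultimately show ?thesis using i1 by simp
    qed
    then show ?thesis using lr by (simp add: dominating_def)
  qed
  show ?thesis using i1 pT rD wpr
    by (auto simp: word_prod_def intro!: bexI[where x=i] image_eqI[where x="(p,r)"])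
qed

text \<open>Conversely, splitting p@r before the last i letters of p gives an avoider followed
  by a word dominating u.\<close>

lemma overlap_dominating_join:
  assumes i: "1 \<le> i" "i \<le> length u" and p: "p \<in> S_overlap u i"
    and r: "r \<in> dominating (drop i u)"
  shows "p @ r \<in> word_prod (avoiders u) (dominating u)"
proof -
  let ?n = "length u"
  have pS: "p \<in> Sset u" using p by (simp add: S_overlap_def)
  have lp: "?n \<le> length p" by (rule Sset_length[OF pS])
  define a where "a = take (length p - i) p"
  define v where "v = drop (length p - i) p @ r"
  have eq: "p @ r = a @ v" by (simp add: a_def v_def)
  have aA: "a \<in> avoiders u"
  proof -
    have "pos_word a" using pS by (auto simp: a_def Sset_def pos_word_def dest: in_set_takeD)
    moreover have "\<not> gfo_le u a"
    proof
      assume "gfo_le u a"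
      then obtain k where "embeds_at u a k" by (auto simp: gfo_le_def)
      then have "k + ?n \<le> length p - i" "embeds_at u p k" unfolding a_def embeds_at_take by auto
      moreover then have "k = length p - ?n" using pS by (auto simp: Sset_def)
      ultimately show False using i lp by simp
    qed
    ultimately show ?thesis by (simp add: avoiders_def)
  qed
  have vD: "v \<in> dominating u"
  proof -
    have lv: "length v = ?n" using r i lp by (simp add: v_def dominating_def)
    have "u!q \<le> v!q" if q: "q < ?n" for q
    proof (cases "q < i")
      case True
      then have "v!q = p!(length p - i + q)" using i lp by (simp add: v_def nth_append)
      then show ?thesis using p True by (simp add: S_overlap_def)
    next
      case False
      then have "v!q = r!(q - i)" using i lp by (simp add: v_def nth_append)
      moreover have "\<forall>j<length u - i. u!(i+j) \<le> r!j" using r by (simp add: dominating_def)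
      ultimately show ?thesis using False q by (auto dest: spec[of _ "q-i"])
    qed
    then show ?thesis using lv by (simp add: dominating_def)
  qed
  show ?thesis using eq aA vD by (auto simp: word_prod_def intro!: image_eqI[where x="(a,v)"])
qed

lemma avoiders_dominating_decomposition:
  assumes "pos_word u"
  shows "word_prod (avoiders u) (dominating u) =
         (\<Union>i\<in>{1..length u}. word_prod (S_overlap u i) (dominating (drop i u)))"
  using avoider_dominating_split[OF _ _ assms] overlap_dominating_join
  by (fastforce simp: word_prod_def)

text \<open>The overlap i is determined by the word: it is fixed by the leftmost embedding.\<close>

lemma overlap_pieces_disjoint:
  assumes "i \<in> {1..length u}" "i' \<in> {1..length u}" "i \<noteq> i'"
  shows "word_prod (S_overlap u i) (dominating (drop i u)) \<inter>
         word_prod (S_overlap u i') (dominating (drop i' u)) = {}"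
proof (rule ccontr)
  assume "\<not> ?thesis"
  then obtain p r p' r' where p: "p \<in> S_overlap u i" "r \<in> dominating (drop i u)"
    and p': "p' \<in> S_overlap u i'" "r' \<in> dominating (drop i' u)" and eq: "p @ r = p' @ r'"
    by (force simp: word_prod_def)
  have pS: "p \<in> Sset u" "p' \<in> Sset u" using p p' by (auto simp: S_overlap_def)
  have "length p - length u = length p' - length u"
    using Sset_leftmost_embedding[OF pS(1), of r] Sset_leftmost_embedding[OF pS(2), of r'] eq
    by simp
  then have "length p = length p'" using Sset_length[OF pS(1)] Sset_length[OF pS(2)] by simp
  moreover have "length r = length u - i" "length r' = length u - i'"
    using p p' by (auto simp: dominating_def)
  moreover have "length (p @ r) = length (p' @ r')" using eq by simp
  ultimately show False using assms by auto
qed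


section \<open>The weight-shifting bijection between S(u) and its overlap subsets\<close>

text \<open>The key property of increasing/decreasing words: if u_q < u_j with j < q, then q
  lies in the weakly decreasing part, so every later letter is at most u_q.\<close>

lemma inc_dec_descent:
  assumes "inc_dec_fact u" "j < q" "q \<le> r" "r < length u" "u!q < u!j"
  shows "u!r \<le> u!q"
proof -
  from assms(1) consider "sorted u" | k where "1 \<le> k" "k < length u" "sorted (take k u)"
      "sorted_wrt (\<ge>) (drop k u)"
    unfolding inc_dec_fact_def by blast
  then show ?thesis
  proof cases
    case 1
    then have "u!j \<le> u!q" using assms by (simp add: sorted_nth_mono)
    then show ?thesis using assms by simp
  next
    case 2
    show ?thesis
    proof (cases "q < k")
      case True
      then have "take k u ! j \<le> take k u ! q"
        using 2 assms by (intro sorted_nth_mono) auto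
      then show ?thesis using True assms by simp
    next
      case False
      show ?thesis
      proof (cases "q = r")
        case False
        have "drop k u ! (q - k) \<ge> drop k u ! (r - k)"
          using 2 assms \<open>\<not> q < k\<close> False by (intro sorted_wrt_nth_less[where P="(\<ge>)", OF 2(4)]) auto
        then show ?thesis using \<open>\<not> q < k\<close> assms by simp
      qed simp
    qed
  qed
qed

text \<open>The amount by which letter k of a word of length m is raised: position k = m-i+j
  (j < i) is raised from the letter u_{n-i+j} it is guaranteed to dominate up to u_j.\<close>

definition raise :: "nat list \<Rightarrow> nat \<Rightarrow> nat \<Rightarrow> nat \<Rightarrow> nat" where
  "raise u i m k = (if m - i \<le> k then u!(k-(m-i)) - u!(k-(m-length u)) else 0)"

definition lift :: "nat list \<Rightarrow> nat \<Rightarrow> nat list \<Rightarrow> nat list" where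
  "lift u i p = map (\<lambda>k. p!k + raise u i (length p) k) [0..<length p]"

definition unlift :: "nat list \<Rightarrow> nat \<Rightarrow> nat list \<Rightarrow> nat list" where
  "unlift u i p = map (\<lambda>k. p!k - raise u i (length p) k) [0..<length p]"

text \<open>The total weight added by lifting: d_i(u) in 0-indexed form.\<close>

definition dsum :: "nat list \<Rightarrow> nat \<Rightarrow> nat" where
  "dsum u i = (\<Sum>j<i. u!j - u!(length u - i + j))"

lemma lift_length [simp]: "length (lift u i p) = length p"
  by (simp add: lift_def)

lemma unlift_length [simp]: "length (unlift u i p) = length p"
  by (simp add: unlift_def)

lemma lift_nth: "k < length p \<Longrightarrow> lift u i p ! k = p!k + raise u i (length p) k"
  by (simp add: lift_def)

lemma unlift_nth: "k < length p \<Longrightarrow> unlift u i p ! k = p!k - raise u i (length p) k"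
  by (simp add: unlift_def)

lemma unlift_lift: "unlift u i (lift u i p) = p"
  by (rule nth_equalityI) (auto simp: unlift_nth lift_nth)

text \<open>Lifting creates no new embedding of u: a letter raised by the lift lies in the
  decreasing tail of the final embedding and therefore was already large enough.\<close>

lemma lift_earlier_embedding:
  assumes idf: "inc_dec_fact u" and i: "1 \<le> i" "i \<le> length u" and p: "p \<in> Sset u"
    and k: "embeds_at u (lift u i p) k" and early: "k < length p - length u"
  shows "embeds_at u p k"
  unfolding embeds_at_def
proof (intro conjI allI impI)
  let ?n = "length u" and ?m = "length p"
  have mn: "?n \<le> ?m" using Sset_length[OF p] .
  show kl: "k + ?n \<le> ?m" using k by (simp add: embeds_at_def)
  fix r assume r: "r < ?n"
  let ?P = "k + r"
  have Pm: "?P < ?m" using r kl by simp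
  have ur: "u!r \<le> lift u i p ! ?P" using k r by (simp add: embeds_at_def)
  show "u!r \<le> p!?P"
  proof (cases "raise u i ?m ?P = 0")
    case True
    then show ?thesis using ur Pm by (simp add: lift_nth)
  next
    case False
    define j where "j = ?P - (?m - i)"
    define q where "q = ?P - (?m - ?n)"
    have c1: "?m - i \<le> ?P" and c2: "u!q < u!j"
      using False by (auto simp: raise_def j_def q_def split: if_splits)
    have qn: "q < ?n" unfolding q_def using Pm mn r by arith
    have "j \<le> q" using c1 i mn by (simp add: j_def q_def)
    moreover have "j \<noteq> q" using c2 by auto
    ultimately have jq: "j < q" by simp
    have qr: "q \<le> r" using early by (simp add: q_def)
    have "u!r \<le> u!q" by (rule inc_dec_descent[OF idf jq qr r c2])
    also have "\<dots> \<le> p!(?m - ?n + q)" by (rule Sset_embeds_at_end[OF p qn])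
    also have "?m - ?n + q = ?P" using c1 i mn by (simp add: q_def)
    finally show ?thesis .
  qed
qed

lemma lift_in_S_overlap:
  assumes idf: "inc_dec_fact u" and i: "1 \<le> i" "i \<le> length u" and p: "p \<in> Sset u"
  shows "lift u i p \<in> S_overlap u i"
proof -
  let ?n = "length u" and ?m = "length p" and ?p' = "lift u i p"
  have mn: "?n \<le> ?m" using Sset_length[OF p] .
  have ge: "p!k \<le> ?p'!k" if "k < ?m" for k using that by (simp add: lift_nth)
  have pos: "pos_word ?p'"
    using p ge unfolding pos_word_iff Sset_def by (auto intro: order_less_le_trans)
  have final: "embeds_at u ?p' (?m - ?n)"
    unfolding embeds_at_def
  proof (intro conjI allI impI)
    show "?m - ?n + ?n \<le> length ?p'" using mn by simp
    fix r assume r: "r < ?n"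
    have "u!r \<le> p!(?m-?n+r)" by (rule Sset_embeds_at_end[OF p r])
    also have "\<dots> \<le> ?p'!(?m-?n+r)" by (rule ge) (use r mn in simp)
    finally show "u!r \<le> ?p'!(?m-?n+r)" .
  qed
  have unique: "k = ?m - ?n" if k: "embeds_at u ?p' k" for k
  proof (rule ccontr)
    assume ne: "k \<noteq> ?m - ?n"
    have "k + ?n \<le> ?m" using k by (simp add: embeds_at_def)
    then have "embeds_at u p k" using lift_earlier_embedding[OF idf i p k] ne by simp
    then show False using p ne by (auto simp: Sset_def)
  qed
  have inS: "?p' \<in> Sset u"
    using pos final unique by (auto simp: Sset_def gfo_le_def)
  have "u!j \<le> ?p'!(?m - i + j)" if j: "j < i" for j
  proof -
    have idx: "?m - i + j < ?m" using j i mn by simp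
    have lifted: "?p'!(?m - i + j) = p!(?m - i + j) + (u!j - u!(?n - i + j))"
      using idx i mn by (simp add: lift_nth raise_def ac_simps)
    have "u!(?n - i + j) \<le> p!(?m - ?n + (?n - i + j))"
      by (rule Sset_embeds_at_end[OF p]) (use j i in simp)
    moreover have "?m - ?n + (?n - i + j) = ?m - i + j" using i mn j by simp
    ultimately have "u!(?n - i + j) \<le> p!(?m - i + j)" by simp
    then show ?thesis unfolding lifted by arith
  qed
  then show ?thesis using inS by (simp add: S_overlap_def)
qed

text \<open>Unlifting a word of the overlap set stays positive (the last n letters still
  dominate u) and keeps the final embedding unique (letters only decrease).\<close>

lemma unlift_S_overlap:
  assumes pu: "pos_word u" and i: "1 \<le> i" "i \<le> length u" and p: "p \<in> S_overlap u i"
  shows "unlift u i p \<in> Sset u" "lift u i (unlift u i p) = p"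
proof -
  let ?n = "length u" and ?m = "length p" and ?q = "unlift u i p"
  have pS: "p \<in> Sset u" using p by (simp add: S_overlap_def)
  have mn: "?n \<le> ?m" using Sset_length[OF pS] .
  have prefix_dominated: "u!(k - (?m - i)) \<le> p!k" if "?m - i \<le> k" "k < ?m" for k
    using p that i by (auto simp: S_overlap_def dest: spec[of _ "k - (?m - i)"])
  have raise_le: "raise u i ?m k \<le> p!k" if k: "k < ?m" for k
    using prefix_dominated[OF _ k] by (auto simp: raise_def)
  show "lift u i ?q = p"
    by (rule nth_equalityI) (auto simp: unlift_nth lift_nth raise_le)
  have le: "?q!k \<le> p!k" if "k < ?m" for k using that by (simp add: unlift_nth)
  have tail: "u!(k - (?m - ?n)) \<le> ?q!k" if k: "k < ?m" "?m - ?n \<le> k" for k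
  proof -
    have "u!(k - (?m - ?n)) \<le> p!k"
      using Sset_embeds_at_end[OF pS, of "k - (?m - ?n)"] k mn by simp
    then show ?thesis
      using prefix_dominated[of k] k by (simp add: unlift_nth raise_def) arith
  qed
  have pos: "pos_word ?q"
    unfolding pos_word_iff
  proof (intro allI impI)
    fix k assume k: "k < length ?q"
    show "0 < ?q!k"
    proof (cases "?m - i \<le> k")
      case True
      have "0 < u!(k - (?m - ?n))"
        using pu k mn i True by (simp add: pos_word_iff)
      also have "\<dots> \<le> ?q!k" using tail k True i by simp
      finally show ?thesis .
    next
      case False
      then have "?q!k = p!k" using k by (simp add: unlift_nth raise_def)
      then show ?thesis using pS k by (auto simp: Sset_def pos_word_iff)
    qed
  qed
  have final: "embeds_at u ?q (?m - ?n)"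
    unfolding embeds_at_def
  proof (intro conjI allI impI)
    show "?m - ?n + ?n \<le> length ?q" using mn by simp
    fix r assume "r < ?n"
    then show "u!r \<le> ?q!(?m - ?n + r)" using tail[of "?m - ?n + r"] mn by simp
  qed
  have unique: "k = length ?q - ?n" if "embeds_at u ?q k" for k
  proof -
    have "embeds_at u p k" using that le unfolding embeds_at_def by (auto intro: order_trans)
    then show ?thesis using pS by (auto simp: Sset_def)
  qed
  show "?q \<in> Sset u" using pos final unique by (auto simp: Sset_def gfo_le_def)
qed

lemma lift_bij:
  assumes "pos_word u" "inc_dec_fact u" "1 \<le> i" "i \<le> length u"
  shows "bij_betw (lift u i) (Sset u) (S_overlap u i)"
  by (rule bij_betw_byWitness[where f'="unlift u i"])
     (use lift_in_S_overlap[OF assms(2-)] unlift_S_overlap[OF assms(1,3,4)] unlift_lift in auto)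

lemma sum_list_lift:
  assumes i: "i \<le> length u" and p: "p \<in> Sset u"
  shows "sum_list (lift u i p) = sum_list p + dsum u i"
proof -
  let ?m = "length p"
  have mn: "length u \<le> ?m" using Sset_length[OF p] .
  have "sum_list (lift u i p) = (\<Sum>k=0..<?m. p!k + raise u i ?m k)"
    by (simp add: lift_def interv_sum_list_conv_sum_set_nat)
  also have "\<dots> = sum_list p + (\<Sum>k=0..<?m. raise u i ?m k)"
    by (simp add: sum.distrib sum_list_sum_nth)
  also have "(\<Sum>k=0..<?m. raise u i ?m k) = (\<Sum>k=?m-i..<?m. raise u i ?m k)"
    using sum.atLeastLessThan_concat[of 0 "?m - i" ?m "raise u i ?m"]
    by (simp add: raise_def)
  also have "\<dots> = (\<Sum>j=0..<i. raise u i ?m (j + (?m - i)))"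
    using sum.shift_bounds_nat_ivl[of "raise u i ?m" 0 "?m - i" i] i mn by simp
  also have "\<dots> = dsum u i"
    unfolding dsum_def lessThan_atLeast0
    by (rule sum.cong) (use i mn in \<open>auto simp: raise_def ac_simps\<close>)
  finally show ?thesis .
qed

lemma word_gf_S_overlap:
  assumes "pos_word u" "inc_dec_fact u" "1 \<le> i" "i \<le> length u"
  shows "word_gf (S_overlap u i) = xvar ^ dsum u i * word_gf (Sset u)"
  by (rule word_gf_shift[OF lift_bij[OF assms]]) (use assms sum_list_lift in auto)

lemma avoiders_second_relation:
  assumes pu: "pos_word u" and idf: "inc_dec_fact u"
  defines "n \<equiv> length u"
  shows "word_gf (avoiders u) * (tvar ^ n * xvar ^ sum_list u) =
         word_gf (Sset u) * ((1 - xvar) *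
           (\<Sum>i = 1..n. tvar ^ (n - i) * xvar ^ (dsum u i + sum_list (drop i u)) * (1 - xvar) ^ (i - 1)))"
proof -
  let ?A = "word_gf (avoiders u)" and ?S = "word_gf (Sset u)"
  have piece: "word_gf (word_prod (S_overlap u i) (dominating (drop i u))) * (1 - xvar) ^ n =
      ?S * ((1 - xvar) * (tvar ^ (n - i) * xvar ^ (dsum u i + sum_list (drop i u)) * (1 - xvar) ^ (i - 1)))"
    if i: "i \<in> {1..n}" for i
  proof -
    let ?D = "word_gf (dominating (drop i u))"
    have powers: "(1 - xvar) ^ n = (1 - xvar) ^ (n - i) * ((1 - xvar) * (1 - xvar) ^ (i - 1))"
      using i by (simp flip: power_add power_Suc)
    have "word_gf (word_prod (S_overlap u i) (dominating (drop i u))) =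
        word_gf (S_overlap u i) * ?D"
      by (rule word_gf_prod, rule inj_append_right_length[where k="n - i"])
         (auto simp: dominating_def n_def)
    also have "\<dots> = xvar ^ dsum u i * ?S * ?D"
      using i word_gf_S_overlap[OF pu idf, of i] by (simp add: n_def)
    finally have "word_gf (word_prod (S_overlap u i) (dominating (drop i u))) * (1 - xvar) ^ n =
        ?S * ((1 - xvar) * (xvar ^ dsum u i * (?D * (1 - xvar) ^ (n - i)) * (1 - xvar) ^ (i - 1)))"
      unfolding powers by (simp only: mult_ac)
    also have "?D * (1 - xvar) ^ (n - i) = tvar ^ (n - i) * xvar ^ sum_list (drop i u)"
      using word_gf_dominating[of "drop i u"] by (simp add: n_def)
    finally show ?thesis by (simp add: power_add mult_ac)
  qed
  have "?A * (tvar ^ n * xvar ^ sum_list u) = ?A * word_gf (dominating u) * (1 - xvar) ^ n"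
    using word_gf_dominating[of u] by (simp add: n_def mult.assoc)
  also have "?A * word_gf (dominating u) = word_gf (word_prod (avoiders u) (dominating u))"
    by (rule word_gf_prod[symmetric], rule inj_append_right_length[where k=n])
       (auto simp: dominating_def n_def)
  also have "\<dots> = (\<Sum>i\<in>{1..n}. word_gf (word_prod (S_overlap u i) (dominating (drop i u))))"
    unfolding avoiders_dominating_decomposition[OF pu] n_def
    by (rule word_gf_UN) (use overlap_pieces_disjoint[of _ u] in auto)
  finally show ?thesis
    by (simp add: sum_distrib_right sum_distrib_left piece)
qed

lemma dval_eq_dsum:
  assumes i: "i \<le> length u"
  shows "dval i u = dsum u i"
proof -
  let ?n = "length u"
  define J where "J = {j\<in>{1..i}. letter u j > letter u (?n - i + j)}"
  have D: "Dset i u = (\<lambda>j. ?n - i + j) ` J" by (auto simp: Dset_def J_def)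
  have "dval i u = (\<Sum>j\<in>J. letter u (?n - i + j - (?n - i)) - letter u (?n - i + j))"
    unfolding dval_def D by (subst sum.reindex) (auto simp: inj_on_def)
  also have "\<dots> = (\<Sum>j\<in>{1..i}. letter u j - letter u (?n - i + j))"
    by simp (rule sum.mono_neutral_left, auto simp: J_def)
  also have "\<dots> = (\<Sum>j<i. letter u (Suc j) - letter u (?n - i + Suc j))"
    by (simp add: sum.atLeast1_atMost_eq)
  also have "\<dots> = dsum u i"
    unfolding dsum_def by (rule sum.cong) (use i in \<open>auto simp: letter_def\<close>)
  finally show ?thesis .
qed


text \<open>Eliminating A from the two relations; (1 - x) is cancelled in an integral domain.\<close>

lemma eliminate_avoiders:
  fixes A S T X N C :: "'a::idom"
  assumes first: "A * (T * X) = (A - 1 + S) * (1 - X)"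
    and second: "A * N = S * ((1 - X) * C)"
    and nonzero: "1 - X \<noteq> 0"
  shows "S * (N + (1 - X - T * X) * C) = N"
proof -
  have key: "(1 - X - T * X) * A = (1 - X) * (1 - S)"
    using first by (simp add: algebra_simps)
  have "(1 - X) * (S * (N + (1 - X - T * X) * C)) = (1 - X) * S * N + (1 - X - T * X) * (A * N)"
    unfolding second by (simp add: algebra_simps)
  also have "\<dots> = (1 - X) * S * N + (1 - X) * (1 - S) * N"
    by (simp add: key mult.assoc[symmetric])
  also have "\<dots> = (1 - X) * N" by (simp add: algebra_simps)
  finally show ?thesis using nonzero by simp
qed

lemma one_minus_xvar_nonzero: "1 - xvar \<noteq> 0"
proof
  assume "1 - xvar = 0"
  then have "(1 - xvar) $ 0 $ 0 = (0::real fps fps) $ 0 $ 0" by simp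
  then show False by (simp add: xvar_def)
qed

text \<open>The denominator has constant coefficient 1: only the summand i = n survives at t = 0.\<close>

lemma denominator_constant_coeff:
  fixes e :: "nat \<Rightarrow> nat"
  assumes "1 \<le> n" "e n = 0"
  shows "(tvar ^ n * xvar ^ a + (1 - xvar - tvar * xvar) *
           (\<Sum>i = 1..n. tvar ^ (n - i) * xvar ^ e i * (1 - xvar) ^ (i - 1))) $ 0 $ 0 = 1"
proof -
  have last_summand: "{1..n} = insert n {1..<n}" using assms(1) by auto
  have "(\<Sum>i = 1..n. tvar ^ (n - i) * xvar ^ e i * (1 - xvar) ^ (i - 1)) $ 0 $ 0 = 1"
    unfolding fps_sum_nth last_summand using assms
    by (simp add: fps_power_zeroth tvar_def xvar_def) (rule sum.neutral, auto simp: power_0_left)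
  then show ?thesis using assms(1)
    by (simp add: fps_power_zeroth tvar_def xvar_def)
qed

lemma fps_fps_right_inverse:
  fixes f :: "'a::field fps fps"
  assumes "f $ 0 $ 0 \<noteq> 0"
  shows "f * inverse f = 1"
proof -
  have "f $ 0 * inverse (f $ 0) = 1"
    by (rule inverse_mult_eq_1') (use assms in simp)
  then have "f * fps_right_inverse f (inverse (f $ 0)) = 1"
    by (rule fps_right_inverse)
  then show ?thesis by (simp add: fps_inverse_def)
qed


theorem theorem1:
  fixes u :: "nat list"
  assumes "pos_word u" and "inc_dec_fact u"
  defines "n \<equiv> length u"
  defines "s \<equiv> (\<lambda>i. drop i u)"
  defines "d \<equiv> (\<lambda>i. if i = n then 0 else dval i u)"
  shows "S_gf u =
    (tvar ^ n * xvar ^ sum_list u) *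
    inverse (tvar ^ n * xvar ^ sum_list u
      + (1 - xvar - tvar * xvar) *
        (\<Sum>i = 1..n. tvar ^ (n - i) * xvar ^ (d i + sum_list (s i)) * (1 - xvar) ^ (i - 1)))"
    (is "_ = ?N * inverse ?D")
proof (cases "u = []")
  case True
  then have "Sset u = {[]}"
    by (auto simp: Sset_def gfo_le_def embeds_at_def pos_word_def)
  moreover have "inverse (1::real fps fps) = 1" by (rule fps_inverse_one') simp
  ultimately show ?thesis using True by (simp add: n_def S_gf_eq_word_gf word_gf_Nil)
next
  case False
  let ?C = "\<Sum>i = 1..n. tvar ^ (n - i) * xvar ^ (d i + sum_list (s i)) * (1 - xvar) ^ (i - 1)"
  have "d i = dsum u i" if "i \<in> {1..n}" for i
    using that dval_eq_dsum[of i u] by (auto simp: d_def n_def dsum_def)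
  then have "?C = (\<Sum>i = 1..n. tvar ^ (n - i) * xvar ^ (dsum u i + sum_list (drop i u)) * (1 - xvar) ^ (i - 1))"
    by (intro sum.cong) (simp_all add: s_def)
  then have "word_gf (avoiders u) * ?N = word_gf (Sset u) * ((1 - xvar) * ?C)"
    using avoiders_second_relation[OF assms(1,2)] by (simp only: n_def)
  then have solved: "S_gf u * ?D = ?N"
    unfolding S_gf_eq_word_gf
    by (rule eliminate_avoiders[OF avoiders_first_relation[OF False] _ one_minus_xvar_nonzero])
  have "?D $ 0 $ 0 = 1"
    by (rule denominator_constant_coeff[where e="\<lambda>i. d i + sum_list (s i)"])
       (use False in \<open>simp_all add: n_def d_def s_def Suc_le_eq\<close>)
  then have "?D * inverse ?D = 1" by (intro fps_fps_right_inverse) simp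
  then have "S_gf u = S_gf u * ?D * inverse ?D" by (simp add: mult.assoc)
  then show ?thesis unfolding solved .
qed

end
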